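(* Let $(\mathcal{L},[\cdot,\cdot,\cdot]_{\mathcal{L}})$ be a (right) $3$-Leibniz algebra over a field $\mathbb{K}$ and $\overline{\mathcal{L}}=\mathbb{K}\oplus\mathcal{L}$. Then the linear map $R$ on $(\overline{\mathcal{L}}\otimes\overline{\mathcal{L}})^{\otimes 2}$ given by $R\big((a_1,x_1)\otimes(a_2,x_2)\otimes(b_1,y_1)\otimes(b_2,y_2)\big)=(b_1,y_1)\otimes(b_2,y_2)\otimes(a_1,x_1)\otimes(a_2,x_2)+(1,0)\otimes(1,0)\otimes\big((0,[x_1,y_1,y_2]_{\mathcal{L}})\otimes(a_2,x_2)+(a_1,x_1)\otimes(0,[x_2,y_1,y_2]_{\mathcal{L}})\big)$ is a solution of the Yang-Baxter equation on $\overline{\mathcal{L}}\otimes\overline{\mathcal{L}}$.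
   Context: A (right) $3$-Leibniz algebra is a vector space $\mathcal{L}$ with a trilinear map $[\cdot,\cdot,\cdot]_{\mathcal{L}}$ such that $[[x_1,x_2,x_3]_{\mathcal{L}},y_1,y_2]_{\mathcal{L}}=[[x_1,y_1,y_2]_{\mathcal{L}},x_2,x_3]_{\mathcal{L}}+[x_1,[x_2,y_1,y_2]_{\mathcal{L}},x_3]_{\mathcal{L}}+[x_1,x_2,[x_3,y_1,y_2]_{\mathcal{L}}]_{\mathcal{L}}$. A solution of the Yang-Baxter equation on $V$ is an invertible linear $R:V\otimes V\to V\otimes V$ with $(R\otimes\mathrm{Id})(\mathrm{Id}\otimes R)(R\otimes\mathrm{Id})=(\mathrm{Id}\otimes R)(R\otimes\mathrm{Id})(\mathrm{Id}\otimes R)$. *)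

theory Defs
  imports Main
begin

text \<open>A vector space over a field 'k with basis indexed by a set I is modelled as
the finitely supported functions I -> 'k (coordinate vectors). The tensor product of
such spaces with bases indexed by I and J is the space with basis indexed by I x J.\<close>

definition supp :: "('a \<Rightarrow> 'k::zero) \<Rightarrow> 'a set" where
  "supp f = {x. f x \<noteq> 0}"

definition fsp :: "'a set \<Rightarrow> ('a \<Rightarrow> 'k::zero) set" where
  "fsp I = {f. finite (supp f) \<and> supp f \<subseteq> I}"

definition vadd :: "('a \<Rightarrow> 'k::plus) \<Rightarrow> ('a \<Rightarrow> 'k) \<Rightarrow> 'a \<Rightarrow> 'k" where
  "vadd f g = (\<lambda>x. f x + g x)"

definition vsmult :: "'k::times \<Rightarrow> ('a \<Rightarrow> 'k) \<Rightarrow> 'a \<Rightarrow> 'k" where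
  "vsmult c f = (\<lambda>x. c * f x)"

definition delta :: "'a \<Rightarrow> 'a \<Rightarrow> 'k::zero_neq_one" where
  "delta x = (\<lambda>y. if y = x then 1 else 0)"

definition lin_ext :: "('a \<Rightarrow> 'c \<Rightarrow> 'k::comm_ring_1) \<Rightarrow> ('a \<Rightarrow> 'k) \<Rightarrow> 'c \<Rightarrow> 'k" where
  "lin_ext g T = (\<lambda>y. \<Sum>x\<in>supp T. T x * g x y)"

definition tens :: "('a \<Rightarrow> 'k::times) \<Rightarrow> ('c \<Rightarrow> 'k) \<Rightarrow> 'a \<times> 'c \<Rightarrow> 'k" where
  "tens A B = (\<lambda>(x, y). A x * B y)"

text \<open>L is the space with basis indexed by B, i.e. fsp B; br is the ternary bracket.\<close>
definition trilinear_on :: "'b set \<Rightarrow> (('b \<Rightarrow> 'k::field) \<Rightarrow> ('b \<Rightarrow> 'k) \<Rightarrow> ('b \<Rightarrow> 'k) \<Rightarrow> ('b \<Rightarrow> 'k)) \<Rightarrow> bool" where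
  "trilinear_on B br \<longleftrightarrow>
    (\<forall>x\<in>fsp B. \<forall>y\<in>fsp B. \<forall>z\<in>fsp B. br x y z \<in> fsp B) \<and>
    (\<forall>x\<in>fsp B. \<forall>x'\<in>fsp B. \<forall>y\<in>fsp B. \<forall>z\<in>fsp B. \<forall>c.
        br (vadd x x') y z = vadd (br x y z) (br x' y z) \<and>
        br (vsmult c x) y z = vsmult c (br x y z) \<and>
        br y (vadd x x') z = vadd (br y x z) (br y x' z) \<and>
        br y (vsmult c x) z = vsmult c (br y x z) \<and>
        br y z (vadd x x') = vadd (br y z x) (br y z x') \<and>
        br y z (vsmult c x) = vsmult c (br y z x))"

definition leibniz3 :: "'b set \<Rightarrow> (('b \<Rightarrow> 'k::field) \<Rightarrow> ('b \<Rightarrow> 'k) \<Rightarrow> ('b \<Rightarrow> 'k) \<Rightarrow> ('b \<Rightarrow> 'k)) \<Rightarrow> bool" where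
  "leibniz3 B br \<longleftrightarrow> trilinear_on B br \<and>
    (\<forall>x1\<in>fsp B. \<forall>x2\<in>fsp B. \<forall>x3\<in>fsp B. \<forall>y1\<in>fsp B. \<forall>y2\<in>fsp B.
       br (br x1 x2 x3) y1 y2 =
         vadd (vadd (br (br x1 y1 y2) x2 x3) (br x1 (br x2 y1 y2) x3)) (br x1 x2 (br x3 y1 y2)))"

text \<open>Elements of K \<oplus> L are pairs (a, x). Its basis is indexed by 'b option:
None stands for (1,0), Some b for (0, e_b).\<close>
definition ubar_idx :: "'b set \<Rightarrow> 'b option set" where
  "ubar_idx B = insert None (Some ` B)"

definition ucoord :: "'k \<times> ('b \<Rightarrow> 'k) \<Rightarrow> 'b option \<Rightarrow> 'k" where
  "ucoord u = (\<lambda>p. case p of None \<Rightarrow> fst u | Some b \<Rightarrow> snd u b)"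

definition ubasis :: "'b option \<Rightarrow> 'k::{zero_neq_one} \<times> ('b \<Rightarrow> 'k)" where
  "ubasis p = (case p of None \<Rightarrow> (1, (\<lambda>_. 0)) | Some b \<Rightarrow> (0, delta b))"

definition tens4 :: "'k::times \<times> ('b \<Rightarrow> 'k) \<Rightarrow> 'k \<times> ('b \<Rightarrow> 'k) \<Rightarrow> 'k \<times> ('b \<Rightarrow> 'k) \<Rightarrow> 'k \<times> ('b \<Rightarrow> 'k)
    \<Rightarrow> ('b option \<times> 'b option) \<times> ('b option \<times> 'b option) \<Rightarrow> 'k" where
  "tens4 u1 u2 u3 u4 = tens (tens (ucoord u1) (ucoord u2)) (tens (ucoord u3) (ucoord u4))"

definition Rpure :: "(('b \<Rightarrow> 'k::field) \<Rightarrow> ('b \<Rightarrow> 'k) \<Rightarrow> ('b \<Rightarrow> 'k) \<Rightarrow> ('b \<Rightarrow> 'k))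
    \<Rightarrow> 'k \<times> ('b \<Rightarrow> 'k) \<Rightarrow> 'k \<times> ('b \<Rightarrow> 'k) \<Rightarrow> 'k \<times> ('b \<Rightarrow> 'k) \<Rightarrow> 'k \<times> ('b \<Rightarrow> 'k)
    \<Rightarrow> ('b option \<times> 'b option) \<times> ('b option \<times> 'b option) \<Rightarrow> 'k" where
  "Rpure br u1 u2 v1 v2 =
     vadd (tens4 v1 v2 u1 u2)
       (vadd (tens4 (1, \<lambda>_. 0) (1, \<lambda>_. 0) (0, br (snd u1) (snd v1) (snd v2)) u2)
             (tens4 (1, \<lambda>_. 0) (1, \<lambda>_. 0) u1 (0, br (snd u2) (snd v1) (snd v2))))"

definition Rmap :: "(('b \<Rightarrow> 'k::field) \<Rightarrow> ('b \<Rightarrow> 'k) \<Rightarrow> ('b \<Rightarrow> 'k) \<Rightarrow> ('b \<Rightarrow> 'k))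
    \<Rightarrow> (('b option \<times> 'b option) \<times> ('b option \<times> 'b option) \<Rightarrow> 'k)
    \<Rightarrow> ('b option \<times> 'b option) \<times> ('b option \<times> 'b option) \<Rightarrow> 'k" where
  "Rmap br = lin_ext (\<lambda>((p1, p2), (q1, q2)). Rpure br (ubasis p1) (ubasis p2) (ubasis q1) (ubasis q2))"

definition op12 :: "(('c \<times> 'c \<Rightarrow> 'k::comm_ring_1) \<Rightarrow> ('c \<times> 'c \<Rightarrow> 'k)) \<Rightarrow> ('c \<times> 'c \<times> 'c \<Rightarrow> 'k) \<Rightarrow> 'c \<times> 'c \<times> 'c \<Rightarrow> 'k" where
  "op12 R = lin_ext (\<lambda>(x, y, z). \<lambda>(u, v, w). R (delta (x, y)) (u, v) * delta z w)"

definition op23 :: "(('c \<times> 'c \<Rightarrow> 'k::comm_ring_1) \<Rightarrow> ('c \<times> 'c \<Rightarrow> 'k)) \<Rightarrow> ('c \<times> 'c \<times> 'c \<Rightarrow> 'k) \<Rightarrow> 'c \<times> 'c \<times> 'c \<Rightarrow> 'k" where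
  "op23 R = lin_ext (\<lambda>(x, y, z). \<lambda>(u, v, w). delta x u * R (delta (y, z)) (v, w))"

definition YBE_solution :: "'c set \<Rightarrow> (('c \<times> 'c \<Rightarrow> 'k::field) \<Rightarrow> ('c \<times> 'c \<Rightarrow> 'k)) \<Rightarrow> bool" where
  "YBE_solution I R \<longleftrightarrow>
     (\<forall>T\<in>fsp (I \<times> I). \<forall>S\<in>fsp (I \<times> I). \<forall>c.
         R (vadd T S) = vadd (R T) (R S) \<and> R (vsmult c T) = vsmult c (R T)) \<and>
     bij_betw R (fsp (I \<times> I)) (fsp (I \<times> I)) \<and>
     (\<forall>T\<in>fsp (I \<times> I \<times> I). op12 R (op23 R (op12 R T)) = op23 R (op12 R (op23 R T)))"

end

theory Submission
  imports Defs
begin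

text \<open>On V = (K \<oplus> L) \<otimes> (K \<oplus> L) the map R reads R (a \<otimes> b) = b \<otimes> a + e \<otimes> [a, b], where
  e = (1, 0) \<otimes> (1, 0) and [u1 \<otimes> u2, v1 \<otimes> v2] = [u1, v1, v2] \<otimes> u2 + u1 \<otimes> [u2, v1, v2] with
  [(a, x), y1, y2] = (0, [x, y1, y2]). The 3-Leibniz identity says that the right multiplications
  by pairs (y1, y2) satisfy a commutator relation; extending them as derivations of the tensor
  square preserves it, and this is exactly the right Leibniz identity
  [[a, b], c] = [[a, c], b] + [a, [b, c]] for V. Moreover e annihilates V on both sides.
  For any right Leibniz algebra with such an element e, R is invertible with inverse
  a \<otimes> b \<mapsto> b \<otimes> a - [b, a] \<otimes> e, and on a \<otimes> b \<otimes> c the two sides of the braid relation differ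
  by e \<otimes> e \<otimes> ([[a, b], c] - [[a, c], b] - [a, [b, c]]).\<close>

section \<open>Coordinate vectors and linear maps\<close>

lemma supp_vadd: "supp (vadd f g :: _ \<Rightarrow> 'k::comm_ring_1) \<subseteq> supp f \<union> supp g"
  by (auto simp: supp_def vadd_def)

lemma supp_vsmult: "supp (vsmult c f :: _ \<Rightarrow> 'k::comm_ring_1) \<subseteq> supp f"
  by (auto simp: supp_def vsmult_def)

lemma supp_delta [simp]: "supp (delta x :: _ \<Rightarrow> 'k::zero_neq_one) = {x}"
  by (auto simp: supp_def delta_def)

lemma supp_zero [simp]: "supp (\<lambda>_. 0) = {}"
  by (auto simp: supp_def)

lemma fsp_finite_supp: "f \<in> fsp I \<Longrightarrow> finite (supp f)"
  by (simp add: fsp_def)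

lemma fsp_vadd: "f \<in> fsp I \<Longrightarrow> g \<in> fsp I \<Longrightarrow> (vadd f g :: _ \<Rightarrow> 'k::comm_ring_1) \<in> fsp I"
  using supp_vadd[of f g] by (auto simp: fsp_def intro: finite_subset)

lemma fsp_vsmult: "f \<in> fsp I \<Longrightarrow> (vsmult c f :: _ \<Rightarrow> 'k::comm_ring_1) \<in> fsp I"
  using supp_vsmult[of c f] by (auto simp: fsp_def intro: finite_subset)

lemma fsp_delta: "x \<in> I \<Longrightarrow> (delta x :: _ \<Rightarrow> 'k::zero_neq_one) \<in> fsp I"
  by (auto simp: fsp_def)

lemma fsp_zero [simp]: "(\<lambda>_. 0) \<in> fsp I"
  by (auto simp: fsp_def)

lemma vadd_zero_right [simp]: "vadd f (\<lambda>_. 0) = (f :: _ \<Rightarrow> 'k::comm_ring_1)"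
  by (simp add: vadd_def)

lemma vadd_assoc: "vadd (vadd f g) h = vadd f (vadd g h :: _ \<Rightarrow> 'k::ab_semigroup_add)"
  and vadd_commute: "vadd f g = vadd g (f :: _ \<Rightarrow> 'k::ab_semigroup_add)"
  and vadd_left_commute: "vadd f (vadd g h) = vadd g (vadd f h :: _ \<Rightarrow> 'k::ab_semigroup_add)"
  by (simp_all add: vadd_def add_ac)

lemmas vadd_ac = vadd_assoc vadd_commute vadd_left_commute

lemma lin_ext_eq_sum:
  assumes "finite S" "supp T \<subseteq> S"
  shows "lin_ext g T y = (\<Sum>x\<in>S. T x * g x y)"
  unfolding lin_ext_def
  by (rule sum.mono_neutral_left) (use assms in \<open>auto simp: supp_def\<close>)

lemma lin_ext_delta [simp]: "lin_ext g (delta x) = g x"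
  by (rule ext) (simp add: lin_ext_def, simp add: delta_def)

lemma lin_ext_vadd:
  assumes "finite (supp T)" "finite (supp S)"
  shows "lin_ext g (vadd T S) = vadd (lin_ext g T) (lin_ext g S)"
proof
  fix y
  let ?A = "supp T \<union> supp S"
  have "lin_ext g (vadd T S) y = (\<Sum>x\<in>?A. vadd T S x * g x y)"
    by (rule lin_ext_eq_sum) (use assms supp_vadd[of T S] in auto)
  also have "\<dots> = (\<Sum>x\<in>?A. T x * g x y) + (\<Sum>x\<in>?A. S x * g x y)"
    by (simp add: vadd_def distrib_right sum.distrib)
  also have "\<dots> = lin_ext g T y + lin_ext g S y"
    using assms by (simp add: lin_ext_eq_sum[of ?A])
  finally show "lin_ext g (vadd T S) y = vadd (lin_ext g T) (lin_ext g S) y"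
    by (simp add: vadd_def)
qed

lemma lin_ext_vsmult:
  assumes "finite (supp T)"
  shows "lin_ext g (vsmult c T) = vsmult c (lin_ext g T)"
proof
  fix y
  have "lin_ext g (vsmult c T) y = (\<Sum>x\<in>supp T. vsmult c T x * g x y)"
    by (rule lin_ext_eq_sum) (use assms supp_vsmult[of c T] in auto)
  also have "\<dots> = c * lin_ext g T y"
    by (simp add: vsmult_def lin_ext_def sum_distrib_left mult.assoc)
  finally show "lin_ext g (vsmult c T) y = vsmult c (lin_ext g T) y"
    by (simp add: vsmult_def)
qed

lemma lin_ext_fsp:
  assumes "T \<in> fsp I" "\<And>x. x \<in> I \<Longrightarrow> g x \<in> fsp J"
  shows "lin_ext g T \<in> fsp J"
proof -
  have "supp (lin_ext g T) \<subseteq> (\<Union>x\<in>supp T. supp (g x))"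
    by (force simp: supp_def lin_ext_def intro: sum.neutral)
  moreover have "finite (\<Union>x\<in>supp T. supp (g x))" "(\<Union>x\<in>supp T. supp (g x)) \<subseteq> J"
    using assms by (auto simp: fsp_def)
  ultimately show ?thesis by (auto simp: fsp_def intro: finite_subset)
qed

definition linear_on :: "'a set \<Rightarrow> (('a \<Rightarrow> 'k::comm_ring_1) \<Rightarrow> ('c \<Rightarrow> 'k)) \<Rightarrow> bool" where
  "linear_on I L \<longleftrightarrow> (\<forall>f\<in>fsp I. \<forall>g\<in>fsp I. \<forall>c.
      L (vadd f g) = vadd (L f) (L g) \<and> L (vsmult c f) = vsmult c (L f))"

lemma linear_onD:
  assumes "linear_on I L" "f \<in> fsp I"
  shows "g \<in> fsp I \<Longrightarrow> L (vadd f g) = vadd (L f) (L g)" "L (vsmult c f) = vsmult c (L f)"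
  using assms unfolding linear_on_def by blast+

lemma linear_on_lin_ext: "linear_on I (lin_ext g)"
  by (auto simp: linear_on_def fsp_def lin_ext_vadd lin_ext_vsmult)

lemma linear_on_id: "linear_on I (\<lambda>f. f)"
  by (simp add: linear_on_def)

lemma linear_on_comp:
  fixes L1 :: "('a \<Rightarrow> 'k::comm_ring_1) \<Rightarrow> ('b \<Rightarrow> 'k)" and L2 :: "('b \<Rightarrow> 'k) \<Rightarrow> ('c \<Rightarrow> 'k)"
  assumes "linear_on I L1" "\<And>f. f \<in> fsp I \<Longrightarrow> L1 f \<in> fsp J" "linear_on J L2"
  shows "linear_on I (\<lambda>f. L2 (L1 f))"
  unfolding linear_on_def
proof (intro ballI allI conjI)
  fix f g :: "'a \<Rightarrow> 'k" and c :: 'k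
  assume "f \<in> fsp I" "g \<in> fsp I"
  then show "L2 (L1 (vadd f g)) = vadd (L2 (L1 f)) (L2 (L1 g))"
    "L2 (L1 (vsmult c f)) = vsmult c (L2 (L1 f))"
    using assms(2) by (simp_all add: linear_onD[OF assms(1)] linear_onD[OF assms(3)])
qed

lemma linear_on_vadd:
  assumes "linear_on I L1" "linear_on I L2"
  shows "linear_on I (\<lambda>f. vadd (L1 f) (L2 f) :: _ \<Rightarrow> 'k::comm_ring_1)"
  using assms unfolding linear_on_def by (auto simp: vadd_def vsmult_def fun_eq_iff algebra_simps)

lemma linear_on_lin_ext_param:
  assumes "finite (supp T)" "\<And>x. x \<in> supp T \<Longrightarrow> linear_on I (g x)"
  shows "linear_on I (\<lambda>f. lin_ext (\<lambda>x. g x f) T)"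
  using assms unfolding linear_on_def lin_ext_def
  by (simp add: vadd_def vsmult_def fun_eq_iff distrib_left sum.distrib sum_distrib_left mult_ac
      cong: sum.cong)

lemma linear_on_zero:
  assumes "linear_on I L"
  shows "L (\<lambda>_. 0) = (\<lambda>_. 0)"
  using linear_onD(2)[OF assms fsp_zero, of 0] by (simp add: vsmult_def)

lemma linear_on_eq_sum:
  assumes L: "linear_on I L" and S: "finite S" "S \<subseteq> I" and f: "supp f \<subseteq> S"
  shows "L f y = (\<Sum>x\<in>S. f x * L (delta x) y)"
  using S f
proof (induction S arbitrary: f rule: finite_induct)
  case empty
  then have "f = (\<lambda>_. 0)" by (auto simp: supp_def)
  then show ?case using linear_on_zero[OF L] by simp
next
  case (insert a S)
  define f' where "f' = f(a := 0)"
  have supp_f': "supp f' \<subseteq> S" using insert.prems by (auto simp: f'_def supp_def)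
  have "f' \<in> fsp I"
    using supp_f' insert.hyps insert.prems by (auto simp: fsp_def intro: finite_subset)
  moreover have "vsmult (f a) (delta a) \<in> fsp I"
    using insert.prems by (auto intro: fsp_vsmult fsp_delta)
  moreover have "L (vsmult (f a) (delta a)) = vsmult (f a) (L (delta a))"
    using insert.prems by (simp add: linear_onD[OF L] fsp_delta)
  ultimately have "L (vadd (vsmult (f a) (delta a)) f') = vadd (vsmult (f a) (L (delta a))) (L f')"
    by (simp add: linear_onD[OF L])
  moreover have "vadd (vsmult (f a) (delta a)) f' = f"
    by (auto simp: vadd_def vsmult_def delta_def f'_def)
  ultimately have "L f = vadd (vsmult (f a) (L (delta a))) (L f')"
    by simp
  then have "L f y = f a * L (delta a) y + L f' y"
    by (simp add: vadd_def vsmult_def)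
  also have "L f' y = (\<Sum>x\<in>S. f x * L (delta x) y)"
    using insert supp_f' by (auto simp: f'_def intro!: sum.cong)
  finally show ?case using insert.hyps by simp
qed

lemma linear_on_eq_lin_ext:
  assumes "linear_on I L" "f \<in> fsp I"
  shows "L f = lin_ext (\<lambda>x. L (delta x)) f"
  using assms by (simp add: fsp_def lin_ext_def linear_on_eq_sum fun_eq_iff)

lemma linear_on_eq_on_basis:
  assumes "linear_on I L" "linear_on I L'" "\<And>x. x \<in> I \<Longrightarrow> L (delta x) = L' (delta x)"
    "f \<in> fsp I"
  shows "L f = L' f"
proof -
  have "L f = lin_ext (\<lambda>x. L (delta x)) f" by (rule linear_on_eq_lin_ext) fact+
  also have "\<dots> = lin_ext (\<lambda>x. L' (delta x)) f"
    using assms(3,4) by (auto simp: lin_ext_def fsp_def intro!: ext sum.cong)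
  also have "\<dots> = L' f" by (rule linear_on_eq_lin_ext[symmetric]) fact+
  finally show ?thesis .
qed

lemma linear_on_fsp:
  assumes "linear_on I L" "\<And>x. x \<in> I \<Longrightarrow> L (delta x) \<in> fsp J" "f \<in> fsp I"
  shows "L f \<in> fsp J"
  using linear_on_eq_lin_ext[OF assms(1,3)] lin_ext_fsp[OF assms(3), of "\<lambda>x. L (delta x)"] assms(2)
  by simp

section \<open>Bilinear maps and tensor products\<close>

definition bilinear_on ::
    "'a set \<Rightarrow> 'b set \<Rightarrow> (('a \<Rightarrow> 'k::comm_ring_1) \<Rightarrow> ('b \<Rightarrow> 'k) \<Rightarrow> ('c \<Rightarrow> 'k)) \<Rightarrow> bool" where
  "bilinear_on I J P \<longleftrightarrow>
    (\<forall>b\<in>fsp J. linear_on I (\<lambda>a. P a b)) \<and> (\<forall>a\<in>fsp I. linear_on J (P a))"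

lemma bilinear_on_eq_on_basis:
  assumes "bilinear_on I J P" "bilinear_on I J Q"
    "\<And>x y. x \<in> I \<Longrightarrow> y \<in> J \<Longrightarrow> P (delta x) (delta y) = Q (delta x) (delta y)"
    "a \<in> fsp I" "b \<in> fsp J"
  shows "P a b = Q a b"
proof (rule linear_on_eq_on_basis[of I "\<lambda>a. P a b" "\<lambda>a. Q a b"])
  show "linear_on I (\<lambda>a. P a b)" "linear_on I (\<lambda>a. Q a b)"
    using assms by (auto simp: bilinear_on_def)
  fix x assume x: "x \<in> I"
  show "P (delta x) b = Q (delta x) b"
    by (rule linear_on_eq_on_basis[of J]) (use assms x fsp_delta[OF x] in \<open>auto simp: bilinear_on_def\<close>)
qed fact

lemma supp_tens: "supp (tens a b :: _ \<Rightarrow> 'k::comm_ring_1) \<subseteq> supp a \<times> supp b"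
  by (auto simp: supp_def tens_def)

lemma fsp_tens: "a \<in> fsp I \<Longrightarrow> b \<in> fsp J \<Longrightarrow> (tens a b :: _ \<Rightarrow> 'k::comm_ring_1) \<in> fsp (I \<times> J)"
  using supp_tens[of a b] by (auto simp: fsp_def intro: finite_subset)

lemma tens_delta: "tens (delta x) (delta y) = (delta (x, y) :: _ \<Rightarrow> 'k::comm_ring_1)"
  by (auto simp: tens_def delta_def fun_eq_iff)

lemma tens_zero [simp]:
  "tens (\<lambda>_. 0) b = (\<lambda>_. 0 :: 'k::comm_ring_1)" "tens a (\<lambda>_. 0) = (\<lambda>_. 0 :: 'k::comm_ring_1)"
  by (simp_all add: tens_def fun_eq_iff)

lemma tens_vadd_left: "tens (vadd a a') b = (vadd (tens a b) (tens a' b) :: _ \<Rightarrow> 'k::comm_ring_1)"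
  and tens_vadd_right: "tens a (vadd b b') = (vadd (tens a b) (tens a b') :: _ \<Rightarrow> 'k::comm_ring_1)"
  and tens_vsmult_left: "tens (vsmult c a) b = (vsmult c (tens a b) :: _ \<Rightarrow> 'k::comm_ring_1)"
  and tens_vsmult_right: "tens a (vsmult c b) = (vsmult c (tens a b) :: _ \<Rightarrow> 'k::comm_ring_1)"
  by (auto simp: tens_def vadd_def vsmult_def fun_eq_iff algebra_simps)

lemma bilinear_on_tens: "bilinear_on I J (tens :: _ \<Rightarrow> _ \<Rightarrow> _ \<Rightarrow> 'k::comm_ring_1)"
  by (simp add: bilinear_on_def linear_on_def tens_vadd_left tens_vadd_right
      tens_vsmult_left tens_vsmult_right)

lemma linear_on_tens_eq:
  fixes L :: "('a \<times> 'b \<Rightarrow> 'k::field) \<Rightarrow> ('c \<Rightarrow> 'k)"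
  assumes L: "linear_on (I \<times> J) L" and P: "bilinear_on I J P"
    and basis: "\<And>x y. x \<in> I \<Longrightarrow> y \<in> J \<Longrightarrow> L (delta (x, y)) = P (delta x) (delta y)"
    and "a \<in> fsp I" "b \<in> fsp J"
  shows "L (tens a b) = P a b"
proof (rule bilinear_on_eq_on_basis[OF _ P _ \<open>a \<in> fsp I\<close> \<open>b \<in> fsp J\<close>])
  show "bilinear_on I J (\<lambda>a b. L (tens a b))"
    using bilinear_on_tens[of I J] unfolding bilinear_on_def
    by (auto intro: linear_on_comp[OF _ _ L] fsp_tens)
qed (simp add: basis tens_delta)

lemma fsp_slice_fst: "F \<in> fsp (I \<times> J) \<Longrightarrow> (\<lambda>s. F (s, w)) \<in> fsp I"
  and fsp_slice_snd: "F \<in> fsp (I \<times> J) \<Longrightarrow> (\<lambda>t. F (v, t)) \<in> fsp J"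
proof -
  assume F: "F \<in> fsp (I \<times> J)"
  have "supp (\<lambda>s. F (s, w)) \<subseteq> fst ` supp F" "supp (\<lambda>t. F (v, t)) \<subseteq> snd ` supp F"
    by (force simp: supp_def)+
  moreover have "fst ` supp F \<subseteq> I" "finite (fst ` supp F)" "snd ` supp F \<subseteq> J" "finite (snd ` supp F)"
    using F by (auto simp: fsp_def)
  ultimately show "(\<lambda>s. F (s, w)) \<in> fsp I" "(\<lambda>t. F (v, t)) \<in> fsp J"
    unfolding fsp_def by (auto intro: finite_subset)
qed

lemma fsp_linear_on_slices_fst:
  assumes "linear_on J L" "F \<in> fsp (I \<times> J)"
  shows "(\<lambda>s. L (\<lambda>t. F (s, t)) w) \<in> fsp I"
proof -
  have "supp (\<lambda>s. L (\<lambda>t. F (s, t)) w) \<subseteq> fst ` supp F"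
  proof
    fix s assume s: "s \<in> supp (\<lambda>s. L (\<lambda>t. F (s, t)) w)"
    show "s \<in> fst ` supp F"
    proof (rule ccontr)
      assume "s \<notin> fst ` supp F"
      then have "(\<lambda>t. F (s, t)) = (\<lambda>_. 0)" by (force simp: supp_def fun_eq_iff)
      with s linear_on_zero[OF assms(1)] show False by (simp add: supp_def)
    qed
  qed
  moreover have "fst ` supp F \<subseteq> I" "finite (fst ` supp F)" using assms(2) by (auto simp: fsp_def)
  ultimately show ?thesis unfolding fsp_def by (auto intro: finite_subset)
qed

lemma fsp_swap: "F \<in> fsp (I \<times> J) \<Longrightarrow> (\<lambda>(s, t). F (t, s)) \<in> fsp (J \<times> I)"
proof -
  assume F: "F \<in> fsp (I \<times> J)"
  have "supp (\<lambda>(s, t). F (t, s)) = prod.swap ` supp F"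
    by (auto simp: supp_def image_iff)
  then show ?thesis using F by (auto simp: fsp_def)
qed

lemma linear_on_slices_commute:
  assumes L1: "linear_on I L1" and L2: "linear_on J L2" and F: "F \<in> fsp (I \<times> J)"
  shows "L1 (\<lambda>s. L2 (\<lambda>t. F (s, t)) w2) w1 = L2 (\<lambda>t. L1 (\<lambda>s. F (s, t)) w1) w2"
proof -
  define S1 where "S1 = fst ` supp F"
  define S2 where "S2 = snd ` supp F"
  have S: "finite S1" "S1 \<subseteq> I" "finite S2" "S2 \<subseteq> J"
    using F by (auto simp: S1_def S2_def fsp_def)
  have row: "supp (\<lambda>t. F (s, t)) \<subseteq> S2" and col: "supp (\<lambda>s. F (s, t)) \<subseteq> S1" for s t
    by (force simp: supp_def S1_def S2_def)+
  have sum_row: "supp (\<lambda>s. \<Sum>t\<in>S2. F (s, t) * L2 (delta t) w2) \<subseteq> S1"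
    and sum_col: "supp (\<lambda>t. \<Sum>s\<in>S1. F (s, t) * L1 (delta s) w1) \<subseteq> S2"
    by (force simp: supp_def S1_def S2_def image_iff dest!: sum.not_neutral_contains_not_neutral)+
  have "L1 (\<lambda>s. L2 (\<lambda>t. F (s, t)) w2) w1
      = L1 (\<lambda>s. \<Sum>t\<in>S2. F (s, t) * L2 (delta t) w2) w1"
    using linear_on_eq_sum[OF L2 S(3,4) row] by simp
  also have "\<dots> = (\<Sum>s\<in>S1. (\<Sum>t\<in>S2. F (s, t) * L2 (delta t) w2) * L1 (delta s) w1)"
    by (rule linear_on_eq_sum[OF L1 S(1,2) sum_row])
  also have "\<dots> = (\<Sum>t\<in>S2. (\<Sum>s\<in>S1. F (s, t) * L1 (delta s) w1) * L2 (delta t) w2)"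
    by (simp add: sum_distrib_left sum_distrib_right mult_ac sum.swap[of _ S1])
  also have "\<dots> = L2 (\<lambda>t. \<Sum>s\<in>S1. F (s, t) * L1 (delta s) w1) w2"
    by (rule linear_on_eq_sum[OF L2 S(3,4) sum_col, symmetric])
  also have "\<dots> = L2 (\<lambda>t. L1 (\<lambda>s. F (s, t)) w1) w2"
    using linear_on_eq_sum[OF L1 S(1,2) col] by simp
  finally show ?thesis .
qed

lemma sum_supp_delta: "finite (supp c) \<Longrightarrow> (\<Sum>z\<in>supp c. c z * delta z w) = (c w :: 'k::comm_ring_1)"
  by (simp add: delta_def supp_def if_distrib[of "(*) _"] sum.If_cases Int_insert_right)

lemma linear_on_op12: "linear_on J (op12 R)"
  and linear_on_op23: "linear_on J (op23 R)"
  unfolding op12_def op23_def by (rule linear_on_lin_ext)+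

lemma op12_tens:
  fixes R :: "('c \<times> 'c \<Rightarrow> 'k::field) \<Rightarrow> ('c \<times> 'c \<Rightarrow> 'k)"
  assumes R: "linear_on (I \<times> I) R" and abc: "a \<in> fsp I" "b \<in> fsp I" "c \<in> fsp I"
  shows "op12 R (tens a (tens b c)) = (\<lambda>(u, v, w). R (tens a b) (u, v) * c w)"
proof (intro ext, clarify)
  fix u v w
  let ?S = "supp a \<times> supp b"
  have fin: "finite (supp a)" "finite (supp b)" "finite (supp c)"
    using abc by (simp_all add: fsp_finite_supp)
  have "op12 R (tens a (tens b c)) (u, v, w)
      = (\<Sum>x\<in>supp a. \<Sum>y\<in>supp b. \<Sum>z\<in>supp c.
          a x * (b y * c z) * (R (delta (x, y)) (u, v) * delta z w))"
    unfolding op12_def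
    using supp_tens[of a "tens b c"] supp_tens[of b c]
    by (subst lin_ext_eq_sum[of "supp a \<times> supp b \<times> supp c"]) (auto simp: fin sum.cartesian_product' tens_def)
  also have "\<dots> = (\<Sum>p\<in>?S. tens a b p * R (delta p) (u, v)) * (\<Sum>z\<in>supp c. c z * delta z w)"
    by (simp add: sum.cartesian_product' tens_def sum_distrib_left sum_distrib_right mult_ac)
  also have "\<dots> = R (tens a b) (u, v) * c w"
  proof -
    have "R (tens a b) (u, v) = (\<Sum>p\<in>?S. tens a b p * R (delta p) (u, v))"
      by (rule linear_on_eq_sum[OF R]) (use abc fin supp_tens[of a b] in \<open>auto simp: fsp_def\<close>)
    then show ?thesis by (simp add: sum_supp_delta fin)
  qed
  finally show "op12 R (tens a (tens b c)) (u, v, w) = R (tens a b) (u, v) * c w" .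
qed

lemma op23_tens:
  fixes R :: "('c \<times> 'c \<Rightarrow> 'k::field) \<Rightarrow> ('c \<times> 'c \<Rightarrow> 'k)"
  assumes R: "linear_on (I \<times> I) R" and "a \<in> fsp I" "X \<in> fsp (I \<times> I)"
  shows "op23 R (tens a X) = tens a (R X)"
proof (rule linear_on_tens_eq[OF linear_on_op23 _ _ assms(2,3)])
  show "bilinear_on I (I \<times> I) (\<lambda>a X. tens a (R X))"
    using R by (simp add: bilinear_on_def linear_on_def tens_vadd_left tens_vadd_right
        tens_vsmult_left tens_vsmult_right)
qed (auto simp: op23_def tens_def)

section \<open>Solutions of the Yang-Baxter equation from right Leibniz algebras\<close>

locale leibniz_braiding =
  fixes I :: "'c set"
    and D :: "('c \<Rightarrow> 'k::field) \<Rightarrow> ('c \<Rightarrow> 'k) \<Rightarrow> ('c \<Rightarrow> 'k)"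
    and e :: "'c \<Rightarrow> 'k"
    and R :: "('c \<times> 'c \<Rightarrow> 'k) \<Rightarrow> ('c \<times> 'c \<Rightarrow> 'k)"
  assumes D_fsp: "a \<in> fsp I \<Longrightarrow> b \<in> fsp I \<Longrightarrow> D a b \<in> fsp I"
    and D_bilinear: "bilinear_on I I D"
    and D_leibniz: "a \<in> fsp I \<Longrightarrow> b \<in> fsp I \<Longrightarrow> c \<in> fsp I \<Longrightarrow>
      D (D a b) c = vadd (D (D a c) b) (D a (D b c))"
    and e_fsp: "e \<in> fsp I"
    and D_e_left: "a \<in> fsp I \<Longrightarrow> D e a = (\<lambda>_. 0)"
    and D_e_right: "a \<in> fsp I \<Longrightarrow> D a e = (\<lambda>_. 0)"
    and R_linear: "linear_on (I \<times> I) R"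
    and R_tens: "a \<in> fsp I \<Longrightarrow> b \<in> fsp I \<Longrightarrow> R (tens a b) = vadd (tens b a) (tens e (D a b))"
begin

lemma R_fsp: "T \<in> fsp (I \<times> I) \<Longrightarrow> R T \<in> fsp (I \<times> I)"
  by (rule linear_on_fsp[OF R_linear])
     (auto simp: tens_delta[symmetric] R_tens fsp_delta intro!: fsp_vadd fsp_tens D_fsp e_fsp)

lemma op12_R_tens:
  assumes "a \<in> fsp I" "b \<in> fsp I" "c \<in> fsp I"
  shows "op12 R (tens a (tens b c)) = vadd (tens b (tens a c)) (tens e (tens (D a b) c))"
  using assms by (simp add: op12_tens[OF R_linear] R_tens) (auto simp: vadd_def tens_def fun_eq_iff algebra_simps)

lemma op23_R_tens:
  assumes "a \<in> fsp I" "b \<in> fsp I" "c \<in> fsp I"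
  shows "op23 R (tens a (tens b c)) = vadd (tens a (tens c b)) (tens a (tens e (D b c)))"
  using assms by (simp add: op23_tens[OF R_linear] fsp_tens R_tens tens_vadd_right)

lemma op12_R_vadd: "X \<in> fsp (I \<times> I \<times> I) \<Longrightarrow> Y \<in> fsp (I \<times> I \<times> I) \<Longrightarrow>
    op12 R (vadd X Y) = vadd (op12 R X) (op12 R Y)"
  and op23_R_vadd: "X \<in> fsp (I \<times> I \<times> I) \<Longrightarrow> Y \<in> fsp (I \<times> I \<times> I) \<Longrightarrow>
    op23 R (vadd X Y) = vadd (op23 R X) (op23 R Y)"
  by (simp_all add: linear_onD[OF linear_on_op12] linear_onD[OF linear_on_op23])

lemma YBE_tens:
  assumes abc: "a \<in> fsp I" "b \<in> fsp I" "c \<in> fsp I"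
  shows "op12 R (op23 R (op12 R (tens a (tens b c)))) = op23 R (op12 R (op23 R (tens a (tens b c))))"
proof -
  note fsps = abc e_fsp D_fsp fsp_tens fsp_vadd
  have "op12 R (op23 R (op12 R (tens a (tens b c)))) =
      vadd (vadd (vadd (tens c (tens b a)) (tens e (tens (D b c) a)))
                 (vadd (tens e (tens b (D a c))) (tens e (tens (D b e) (D a c)))))
           (vadd (vadd (tens c (tens e (D a b))) (tens e (tens (D e c) (D a b))))
                 (vadd (tens e (tens e (D (D a b) c))) (tens e (tens (D e e) (D (D a b) c)))))"
    by (simp add: op12_R_tens op23_R_tens op12_R_vadd op23_R_vadd fsps)
  also have "\<dots> = vadd (vadd (vadd (tens c (tens b a)) (tens e (tens (D b c) a)))
                 (tens e (tens b (D a c))))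
           (vadd (tens c (tens e (D a b))) (tens e (tens e (D (D a b) c))))"
    by (simp add: D_e_left D_e_right fsps)
  also have "\<dots> = vadd (vadd (vadd (tens c (tens b a)) (tens c (tens e (D a b))))
        (vadd (tens e (tens b (D a c))) (tens e (tens e (D (D a c) b)))))
      (vadd (tens e (tens (D b c) a)) (tens e (tens e (D a (D b c)))))"
    by (simp add: D_leibniz[OF abc] tens_vadd_right vadd_ac)
  also have "\<dots> = op23 R (op12 R (op23 R (tens a (tens b c))))"
    by (simp add: op12_R_tens op23_R_tens op12_R_vadd op23_R_vadd D_e_left D_e_right fsps)
  finally show ?thesis .
qed

lemma op12_R_fsp:
  assumes "T \<in> fsp (I \<times> I \<times> I)"
  shows "op12 R T \<in> fsp (I \<times> I \<times> I)"
proof (rule linear_on_fsp[OF linear_on_op12 _ assms])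
  fix z assume "z \<in> I \<times> I \<times> I"
  then show "op12 R (delta z) \<in> fsp (I \<times> I \<times> I)"
    by (auto simp: tens_delta[symmetric] op12_R_tens fsp_delta intro!: fsp_vadd fsp_tens D_fsp e_fsp)
qed

lemma op23_R_fsp:
  assumes "T \<in> fsp (I \<times> I \<times> I)"
  shows "op23 R T \<in> fsp (I \<times> I \<times> I)"
proof (rule linear_on_fsp[OF linear_on_op23 _ assms])
  fix z assume "z \<in> I \<times> I \<times> I"
  then show "op23 R (delta z) \<in> fsp (I \<times> I \<times> I)"
    by (auto simp: tens_delta[symmetric] op23_R_tens fsp_delta intro!: fsp_vadd fsp_tens D_fsp e_fsp)
qed

lemma YBE:
  assumes "T \<in> fsp (I \<times> I \<times> I)"
  shows "op12 R (op23 R (op12 R T)) = op23 R (op12 R (op23 R T))"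
proof (rule linear_on_eq_on_basis[OF _ _ _ assms])
  show "linear_on (I \<times> I \<times> I) (\<lambda>T. op12 R (op23 R (op12 R T)))"
    by (rule linear_on_comp[OF linear_on_comp[OF linear_on_op12 op12_R_fsp linear_on_op23] _
          linear_on_op12[of "I \<times> I \<times> I"]])
       (simp_all add: op12_R_fsp op23_R_fsp)
  show "linear_on (I \<times> I \<times> I) (\<lambda>T. op23 R (op12 R (op23 R T)))"
    by (rule linear_on_comp[OF linear_on_comp[OF linear_on_op23 op23_R_fsp linear_on_op12] _
          linear_on_op23[of "I \<times> I \<times> I"]])
       (simp_all add: op12_R_fsp op23_R_fsp)
qed (auto simp: tens_delta[symmetric] intro!: YBE_tens fsp_delta)

definition R_inv :: "('c \<times> 'c \<Rightarrow> 'k) \<Rightarrow> ('c \<times> 'c \<Rightarrow> 'k)" where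
  "R_inv = lin_ext (\<lambda>(x, y). vadd (tens (delta y) (delta x)) (vsmult (-1) (tens (D (delta y) (delta x)) e)))"

lemma R_inv_tens:
  assumes "a \<in> fsp I" "b \<in> fsp I"
  shows "R_inv (tens a b) = vadd (tens b a) (vsmult (-1) (tens (D b a) e))"
proof (rule linear_on_tens_eq[OF _ _ _ assms])
  show "bilinear_on I I (\<lambda>a b. vadd (tens b a) (vsmult (-1) (tens (D b a) e)))"
    using D_bilinear unfolding bilinear_on_def linear_on_def
    by (simp add: tens_vadd_left tens_vadd_right tens_vsmult_left tens_vsmult_right)
       (simp add: vadd_def vsmult_def fun_eq_iff algebra_simps)
qed (simp_all add: R_inv_def linear_on_lin_ext)

lemma R_inv_linear: "linear_on (I \<times> I) R_inv"
  by (simp add: R_inv_def linear_on_lin_ext)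

lemma R_inv_fsp: "T \<in> fsp (I \<times> I) \<Longrightarrow> R_inv T \<in> fsp (I \<times> I)"
  by (rule linear_on_fsp[OF R_inv_linear])
     (auto simp: tens_delta[symmetric] R_inv_tens fsp_delta intro!: fsp_vadd fsp_vsmult fsp_tens D_fsp e_fsp)

lemma R_R_inv_tens:
  assumes "a \<in> fsp I" "b \<in> fsp I"
  shows "R (R_inv (tens a b)) = tens a b"
  using assms
  by (simp add: R_inv_tens R_tens linear_onD[OF R_linear] fsp_tens fsp_vsmult D_fsp e_fsp D_e_right)
     (simp add: vadd_def vsmult_def fun_eq_iff)

lemma R_inv_R_tens:
  assumes "a \<in> fsp I" "b \<in> fsp I"
  shows "R_inv (R (tens a b)) = tens a b"
  using assms
  by (simp add: R_inv_tens R_tens linear_onD[OF R_inv_linear] fsp_tens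
      D_fsp e_fsp D_e_right)
     (simp add: vadd_def vsmult_def fun_eq_iff)

lemma R_bij: "bij_betw R (fsp (I \<times> I)) (fsp (I \<times> I))"
proof (rule bij_betw_byWitness[where f' = R_inv])
  show "\<forall>T\<in>fsp (I \<times> I). R_inv (R T) = T"
  proof
    fix T :: "'c \<times> 'c \<Rightarrow> 'k" assume T: "T \<in> fsp (I \<times> I)"
    show "R_inv (R T) = T"
      by (rule linear_on_eq_on_basis[OF linear_on_comp[OF R_linear R_fsp R_inv_linear] linear_on_id _ T])
         (auto simp: tens_delta[symmetric] R_inv_R_tens fsp_delta)
  qed
  show "\<forall>T\<in>fsp (I \<times> I). R (R_inv T) = T"
  proof
    fix T :: "'c \<times> 'c \<Rightarrow> 'k" assume T: "T \<in> fsp (I \<times> I)"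
    show "R (R_inv T) = T"
      by (rule linear_on_eq_on_basis[OF linear_on_comp[OF R_inv_linear R_inv_fsp R_linear] linear_on_id _ T])
         (auto simp: tens_delta[symmetric] R_R_inv_tens fsp_delta)
  qed
  show "R ` fsp (I \<times> I) \<subseteq> fsp (I \<times> I)" "R_inv ` fsp (I \<times> I) \<subseteq> fsp (I \<times> I)"
    using R_fsp R_inv_fsp by auto
qed

theorem YBE_solution: "YBE_solution I R"
  using R_linear R_bij YBE unfolding YBE_solution_def linear_on_def by blast

end

section \<open>Derivations of a tensor square\<close>

definition tens_der ::
    "(('a \<Rightarrow> 'k::comm_ring_1) \<Rightarrow> ('a \<Rightarrow> 'k)) \<Rightarrow> ('a \<times> 'a \<Rightarrow> 'k) \<Rightarrow> ('a \<times> 'a \<Rightarrow> 'k)" where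
  "tens_der d F = (\<lambda>(w1, w2). d (\<lambda>s. F (s, w2)) w1 + d (\<lambda>t. F (w1, t)) w2)"

lemma linear_on_tens_der:
  assumes "linear_on U d"
  shows "linear_on (U \<times> U) (tens_der d)"
proof -
  have "tens_der d (vadd F G) = vadd (tens_der d F) (tens_der d G)"
    "tens_der d (vsmult c F) = vsmult c (tens_der d F)"
    if "F \<in> fsp (U \<times> U)" "G \<in> fsp (U \<times> U)" for F G c
  proof -
    have "(\<lambda>s. vadd F G (s, w)) = vadd (\<lambda>s. F (s, w)) (\<lambda>s. G (s, w))"
      "(\<lambda>t. vadd F G (w, t)) = vadd (\<lambda>t. F (w, t)) (\<lambda>t. G (w, t))"
      "(\<lambda>s. vsmult c F (s, w)) = vsmult c (\<lambda>s. F (s, w))"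
      "(\<lambda>t. vsmult c F (w, t)) = vsmult c (\<lambda>t. F (w, t))" for w
      by (simp_all add: vadd_def vsmult_def)
    then show "tens_der d (vadd F G) = vadd (tens_der d F) (tens_der d G)"
      "tens_der d (vsmult c F) = vsmult c (tens_der d F)"
      using that by (simp_all add: tens_der_def linear_onD[OF assms] fsp_slice_fst fsp_slice_snd)
        (simp_all add: vadd_def vsmult_def fun_eq_iff algebra_simps)
  qed
  then show ?thesis by (simp add: linear_on_def)
qed

lemma tens_der_tens:
  assumes d: "linear_on U d" and "a \<in> fsp U" "b \<in> fsp U"
  shows "tens_der d (tens a b) = vadd (tens (d a) b) (tens a (d b))"
proof -
  have "(\<lambda>s. tens a b (s, w)) = vsmult (b w) a" "(\<lambda>t. tens a b (w, t)) = vsmult (a w) b" for w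
    by (simp_all add: tens_def vsmult_def fun_eq_iff mult.commute)
  then show ?thesis
    using assms by (simp add: tens_der_def linear_onD[OF d])
      (simp add: vadd_def vsmult_def tens_def fun_eq_iff mult.commute)
qed

lemma fsp_tens_der:
  assumes d: "linear_on U d" "\<And>f. f \<in> fsp U \<Longrightarrow> d f \<in> fsp U" and "F \<in> fsp (U \<times> U)"
  shows "tens_der d F \<in> fsp (U \<times> U)"
  by (rule linear_on_fsp[OF linear_on_tens_der[OF d(1)] _ assms(3)])
     (auto simp: tens_delta[symmetric] tens_der_tens[OF d(1)] fsp_delta intro!: fsp_vadd fsp_tens d(2) fsp_delta)

lemma tens_der_apply: "tens_der d F (w1, w2) = d (\<lambda>s. F (s, w2)) w1 + d (\<lambda>t. F (w1, t)) w2"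
  by (simp add: tens_der_def)

lemma tens_der_vadd_op: "tens_der (\<lambda>f. vadd (d1 f) (d2 f)) F = vadd (tens_der d1 F) (tens_der d2 F)"
  by (simp add: tens_der_def vadd_def fun_eq_iff algebra_simps)

lemma tens_der_vsmult_op: "tens_der (\<lambda>f. vsmult c (d f)) F = vsmult c (tens_der d F)"
  by (simp add: tens_der_def vsmult_def fun_eq_iff algebra_simps)

lemma tens_der_cong:
  assumes "\<And>f. f \<in> fsp U \<Longrightarrow> d f = d' f" "F \<in> fsp (U \<times> U)"
  shows "tens_der d F = tens_der d' F"
  using assms by (simp add: tens_der_def fsp_slice_fst fsp_slice_snd)

lemma tens_der_zero_op [simp]: "tens_der (\<lambda>_ _. 0) F = (\<lambda>_. 0 :: 'k::comm_ring_1)"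
  by (rule ext) (simp add: tens_der_def split: prod.split)

lemma tens_der_tens_der_apply:
  assumes d1: "linear_on U d1" and d2: "linear_on U d2" "\<And>f. f \<in> fsp U \<Longrightarrow> d2 f \<in> fsp U"
    and F: "F \<in> fsp (U \<times> U)"
  shows "tens_der d1 (tens_der d2 F) (w1, w2) =
    d1 (d2 (\<lambda>s. F (s, w2))) w1 + d1 (d2 (\<lambda>t. F (w1, t))) w2
    + (d1 (\<lambda>s. d2 (\<lambda>t. F (s, t)) w2) w1 + d2 (\<lambda>s. d1 (\<lambda>t. F (s, t)) w2) w1)"
proof -
  have "(\<lambda>t. d2 (\<lambda>s. F (s, t)) w1) \<in> fsp U"
    using fsp_linear_on_slices_fst[OF d2(1) fsp_swap[OF F]] by simp
  then have "d1 (\<lambda>t. tens_der d2 F (w1, t)) w2 =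
      d1 (\<lambda>t. d2 (\<lambda>s. F (s, t)) w1) w2 + d1 (d2 (\<lambda>t. F (w1, t))) w2"
    using linear_onD(1)[OF d1, of "\<lambda>t. d2 (\<lambda>s. F (s, t)) w1" "d2 (\<lambda>t. F (w1, t))"]
    by (simp add: tens_der_def d2 fsp_slice_snd[OF F] vadd_def)
  moreover have "d1 (\<lambda>s. tens_der d2 F (s, w2)) w1 =
      d1 (d2 (\<lambda>s. F (s, w2))) w1 + d1 (\<lambda>s. d2 (\<lambda>t. F (s, t)) w2) w1"
    using linear_onD(1)[OF d1, of "d2 (\<lambda>s. F (s, w2))" "\<lambda>s. d2 (\<lambda>t. F (s, t)) w2"]
    by (simp add: tens_der_def d2 fsp_slice_fst[OF F] fsp_linear_on_slices_fst[OF d2(1) F] vadd_def)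
  moreover have "d1 (\<lambda>t. d2 (\<lambda>s. F (s, t)) w1) w2 = d2 (\<lambda>s. d1 (\<lambda>t. F (s, t)) w2) w1"
    by (rule linear_on_slices_commute[OF d2(1) d1 F, symmetric])
  ultimately show ?thesis
    by (simp add: tens_der_def algebra_simps)
qed

text \<open>The mixed terms in tens_der_tens_der_apply are symmetric in d1 and d2, so they cancel
  in the commutator.\<close>
lemma tens_der_commutator:
  assumes d1: "linear_on U d1" "\<And>f. f \<in> fsp U \<Longrightarrow> d1 f \<in> fsp U"
    and d2: "linear_on U d2" "\<And>f. f \<in> fsp U \<Longrightarrow> d2 f \<in> fsp U"
    and comm: "\<And>f. f \<in> fsp U \<Longrightarrow> d1 (d2 f) = vadd (d2 (d1 f)) (d3 f)"
    and F: "F \<in> fsp (U \<times> U)"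
  shows "tens_der d1 (tens_der d2 F) = vadd (tens_der d2 (tens_der d1 F)) (tens_der d3 F)"
proof (intro ext, clarify)
  fix w1 w2
  show "tens_der d1 (tens_der d2 F) (w1, w2) = vadd (tens_der d2 (tens_der d1 F)) (tens_der d3 F) (w1, w2)"
    using tens_der_tens_der_apply[OF d1(1) d2 F] tens_der_tens_der_apply[OF d2(1) d1 F]
    by (simp add: comm fsp_slice_fst[OF F] fsp_slice_snd[OF F] tens_der_apply[of d3] vadd_def algebra_simps)
qed

section \<open>The Leibniz algebra on the tensor square of the unitization\<close>

lemma fsp_lpart: "f \<in> fsp (ubar_idx B) \<Longrightarrow> (\<lambda>c. f (Some c)) \<in> fsp B"
proof -
  assume f: "f \<in> fsp (ubar_idx B)"
  have "supp (\<lambda>c. f (Some c)) = Some -` supp f" by (auto simp: supp_def)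
  moreover have "finite (Some -` supp f)" using f by (auto simp: fsp_def intro: finite_vimageI)
  moreover have "Some -` supp f \<subseteq> B" using f by (auto simp: fsp_def ubar_idx_def)
  ultimately show ?thesis by (simp add: fsp_def)
qed

lemma fsp_ucoord_zero: "v \<in> fsp B \<Longrightarrow> ucoord (0, v) \<in> fsp (ubar_idx B)"
proof -
  assume v: "v \<in> fsp B"
  have "supp (ucoord (0, v)) \<subseteq> Some ` supp v"
    by (auto simp: supp_def ucoord_def split: option.splits)
  then show ?thesis using v by (auto simp: fsp_def ubar_idx_def intro: finite_subset)
qed

lemma ucoord_zero_vadd: "ucoord (0, vadd u v) = vadd (ucoord (0, u)) (ucoord (0, v) :: _ \<Rightarrow> 'k::comm_ring_1)"
  and ucoord_zero_vsmult: "ucoord (0, vsmult c u) = vsmult c (ucoord (0, u) :: _ \<Rightarrow> 'k::comm_ring_1)"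
  and ucoord_zero_zero [simp]: "ucoord (0, \<lambda>_. 0) = (\<lambda>_. 0 :: 'k::comm_ring_1)"
  by (auto simp: ucoord_def vadd_def vsmult_def fun_eq_iff split: option.splits)

lemma lpart_vadd: "(\<lambda>c. vadd f g (Some c)) = vadd (\<lambda>c. f (Some c)) (\<lambda>c. g (Some c))"
  and lpart_vsmult: "(\<lambda>c. vsmult a f (Some c)) = vsmult a (\<lambda>c. f (Some c))"
  by (simp_all add: vadd_def vsmult_def)

lemma lpart_ucoord_zero [simp]: "(\<lambda>c. ucoord (0, v) (Some c)) = v"
  by (simp add: ucoord_def)

lemma ucoord_ubasis: "ucoord (ubasis p) = delta p"
  by (auto simp: ucoord_def ubasis_def delta_def fun_eq_iff split: option.splits)

lemma ucoord_one: "ucoord (1, \<lambda>_. 0) = delta None"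
  by (auto simp: ucoord_def delta_def fun_eq_iff split: option.splits)

lemma lpart_delta: "(\<lambda>c. delta p (Some c)) = snd (ubasis p)"
  by (cases p) (auto simp: ubasis_def delta_def fun_eq_iff)

lemma snd_ubasis_None [simp]: "snd (ubasis None) = (\<lambda>_. 0)"
  by (simp add: ubasis_def)

lemma fsp_snd_ubasis: "p \<in> ubar_idx B \<Longrightarrow> snd (ubasis p) \<in> fsp B"
  by (auto simp: ubar_idx_def ubasis_def fsp_delta)

text \<open>In coordinates, (\<lambda>c. f (Some c)) is the L-component of a vector f of K \<oplus> L, rmul br y1 y2
  is the map (a, x) \<mapsto> (0, [x, y1, y2]), tens_bracket br is the bracket [a, b] on V and
  unit_tens is e.\<close>

definition rmul :: "(('b \<Rightarrow> 'k::field) \<Rightarrow> ('b \<Rightarrow> 'k) \<Rightarrow> ('b \<Rightarrow> 'k) \<Rightarrow> ('b \<Rightarrow> 'k))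
    \<Rightarrow> ('b \<Rightarrow> 'k) \<Rightarrow> ('b \<Rightarrow> 'k) \<Rightarrow> ('b option \<Rightarrow> 'k) \<Rightarrow> ('b option \<Rightarrow> 'k)" where
  "rmul br y1 y2 f = ucoord (0, br (\<lambda>c. f (Some c)) y1 y2)"

definition tens_bracket :: "(('b \<Rightarrow> 'k::field) \<Rightarrow> ('b \<Rightarrow> 'k) \<Rightarrow> ('b \<Rightarrow> 'k) \<Rightarrow> ('b \<Rightarrow> 'k))
    \<Rightarrow> ('b option \<times> 'b option \<Rightarrow> 'k) \<Rightarrow> ('b option \<times> 'b option \<Rightarrow> 'k)
    \<Rightarrow> ('b option \<times> 'b option \<Rightarrow> 'k)" where
  "tens_bracket br F G = lin_ext (\<lambda>(p, q). tens_der (rmul br (snd (ubasis p)) (snd (ubasis q))) F) G"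

definition unit_tens :: "'b option \<times> 'b option \<Rightarrow> 'k::zero_neq_one" where
  "unit_tens = delta (None, None)"

lemma lpart_rmul [simp]: "(\<lambda>c. rmul br y1 y2 f (Some c)) = br (\<lambda>c. f (Some c)) y1 y2"
  by (simp add: rmul_def)

lemma tens_bracket_delta:
  "tens_bracket br F (delta (p, q)) = tens_der (rmul br (snd (ubasis p)) (snd (ubasis q))) F"
  by (simp add: tens_bracket_def)

lemma linear_on_tens_bracket_right: "linear_on I (tens_bracket br F)"
  unfolding tens_bracket_def by (rule linear_on_lin_ext)

lemma linear_on_Rmap: "linear_on I (Rmap br)"
  unfolding Rmap_def by (rule linear_on_lin_ext)

locale leibniz3_algebra =
  fixes B :: "'b set"
    and br :: "('b \<Rightarrow> 'k::field) \<Rightarrow> ('b \<Rightarrow> 'k) \<Rightarrow> ('b \<Rightarrow> 'k) \<Rightarrow> ('b \<Rightarrow> 'k)"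
  assumes leibniz3: "leibniz3 B br"
begin

abbreviation "U \<equiv> ubar_idx B"

lemma br_fsp: "x \<in> fsp B \<Longrightarrow> y \<in> fsp B \<Longrightarrow> z \<in> fsp B \<Longrightarrow> br x y z \<in> fsp B"
  using leibniz3 by (auto simp: leibniz3_def trilinear_on_def)

lemma br_linear:
  assumes "x \<in> fsp B" "y \<in> fsp B" "z \<in> fsp B"
  shows "x' \<in> fsp B \<Longrightarrow> br (vadd x x') y z = vadd (br x y z) (br x' y z)"
    "br (vsmult c x) y z = vsmult c (br x y z)"
    "x' \<in> fsp B \<Longrightarrow> br y (vadd x x') z = vadd (br y x z) (br y x' z)"
    "br y (vsmult c x) z = vsmult c (br y x z)"
    "x' \<in> fsp B \<Longrightarrow> br y z (vadd x x') = vadd (br y z x) (br y z x')"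
    "br y z (vsmult c x) = vsmult c (br y z x)"
  using leibniz3 assms unfolding leibniz3_def trilinear_on_def by blast+

lemma br_leibniz:
  assumes "x1 \<in> fsp B" "x2 \<in> fsp B" "x3 \<in> fsp B" "y1 \<in> fsp B" "y2 \<in> fsp B"
  shows "br (br x1 x2 x3) y1 y2 =
    vadd (vadd (br (br x1 y1 y2) x2 x3) (br x1 (br x2 y1 y2) x3)) (br x1 x2 (br x3 y1 y2))"
  using leibniz3 assms unfolding leibniz3_def by blast

lemma rmul_fsp: "y1 \<in> fsp B \<Longrightarrow> y2 \<in> fsp B \<Longrightarrow> f \<in> fsp U \<Longrightarrow> rmul br y1 y2 f \<in> fsp U"
  unfolding rmul_def by (intro fsp_ucoord_zero br_fsp fsp_lpart)

lemma linear_on_rmul: "y1 \<in> fsp B \<Longrightarrow> y2 \<in> fsp B \<Longrightarrow> linear_on U (rmul br y1 y2)"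
  unfolding linear_on_def rmul_def
  by (simp add: lpart_vadd lpart_vsmult br_linear fsp_lpart ucoord_zero_vadd ucoord_zero_vsmult)

lemma rmul_linear_params:
  assumes "f \<in> fsp U" "y \<in> fsp B" "z \<in> fsp B"
  shows "y' \<in> fsp B \<Longrightarrow> rmul br (vadd y y') z f = vadd (rmul br y z f) (rmul br y' z f)"
    "rmul br (vsmult c y) z f = vsmult c (rmul br y z f)"
    "y' \<in> fsp B \<Longrightarrow> rmul br z (vadd y y') f = vadd (rmul br z y f) (rmul br z y' f)"
    "rmul br z (vsmult c y) f = vsmult c (rmul br z y f)"
  using assms by (simp_all add: rmul_def br_linear fsp_lpart ucoord_zero_vadd ucoord_zero_vsmult)

lemma br_zero:
  assumes "x \<in> fsp B" "y \<in> fsp B"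
  shows "br (\<lambda>_. 0) x y = (\<lambda>_. 0)" "br x (\<lambda>_. 0) y = (\<lambda>_. 0)"
  using br_linear(2)[OF fsp_zero assms, of 0] br_linear(4)[OF fsp_zero assms, of 0]
  by (simp_all add: vsmult_def)

lemma rmul_zero_left: "y \<in> fsp B \<Longrightarrow> f \<in> fsp U \<Longrightarrow> rmul br (\<lambda>_. 0) y f = (\<lambda>_. 0)"
  by (simp add: rmul_def br_zero fsp_lpart)

lemma rmul_delta_None: "y1 \<in> fsp B \<Longrightarrow> y2 \<in> fsp B \<Longrightarrow> rmul br y1 y2 (delta None) = (\<lambda>_. 0)"
  by (simp add: rmul_def lpart_delta br_zero)

lemma rmul_leibniz:
  assumes f: "f \<in> fsp U" and y: "y1 \<in> fsp B" "y2 \<in> fsp B" and z: "z1 \<in> fsp B" "z2 \<in> fsp B"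
  shows "rmul br z1 z2 (rmul br y1 y2 f) =
    vadd (rmul br y1 y2 (rmul br z1 z2 f)) (vadd (rmul br (br y1 z1 z2) y2 f) (rmul br y1 (br y2 z1 z2) f))"
  using br_leibniz[OF fsp_lpart[OF f] y z]
  by (simp add: rmul_def ucoord_zero_vadd vadd_assoc)

lemma tens_der_rmul_commutator:
  assumes F: "F \<in> fsp (U \<times> U)" and y: "y1 \<in> fsp B" "y2 \<in> fsp B" and z: "z1 \<in> fsp B" "z2 \<in> fsp B"
  shows "tens_der (rmul br z1 z2) (tens_der (rmul br y1 y2) F) =
    vadd (tens_der (rmul br y1 y2) (tens_der (rmul br z1 z2) F))
      (vadd (tens_der (rmul br (br y1 z1 z2) y2) F) (tens_der (rmul br y1 (br y2 z1 z2)) F))"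
  by (simp add: tens_der_commutator[OF linear_on_rmul[OF z] rmul_fsp[OF z] linear_on_rmul[OF y]
        rmul_fsp[OF y] rmul_leibniz[OF _ y z] F] tens_der_vadd_op)

lemma tens_bracket_fsp:
  "F \<in> fsp (U \<times> U) \<Longrightarrow> G \<in> fsp (U \<times> U) \<Longrightarrow> tens_bracket br F G \<in> fsp (U \<times> U)"
  unfolding tens_bracket_def
  by (rule lin_ext_fsp) (auto intro!: fsp_tens_der linear_on_rmul rmul_fsp fsp_snd_ubasis)

lemma linear_on_tens_bracket_left:
  assumes "G \<in> fsp (U \<times> U)"
  shows "linear_on (U \<times> U) (\<lambda>F. tens_bracket br F G)"
  unfolding tens_bracket_def using assms
  by (intro linear_on_lin_ext_param)
     (auto simp: fsp_def intro!: linear_on_tens_der linear_on_rmul fsp_snd_ubasis)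

lemma bilinear_on_tens_bracket: "bilinear_on (U \<times> U) (U \<times> U) (tens_bracket br)"
  by (simp add: bilinear_on_def linear_on_tens_bracket_left linear_on_tens_bracket_right)

lemma tens_bracket_tens:
  assumes F: "F \<in> fsp (U \<times> U)" and "A \<in> fsp U" "A' \<in> fsp U"
  shows "tens_bracket br F (tens A A') = tens_der (rmul br (\<lambda>c. A (Some c)) (\<lambda>c. A' (Some c))) F"
proof (rule linear_on_tens_eq[OF linear_on_tens_bracket_right _ _ assms(2,3)])
  have "tens_der (rmul br (vadd y y') z) F = vadd (tens_der (rmul br y z) F) (tens_der (rmul br y' z) F)"
    "tens_der (rmul br z (vadd y y')) F = vadd (tens_der (rmul br z y) F) (tens_der (rmul br z y') F)"
    if "y \<in> fsp B" "y' \<in> fsp B" "z \<in> fsp B" for y y' z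
    by (simp_all only: tens_der_vadd_op[symmetric])
       (rule tens_der_cong[OF _ F], simp add: rmul_linear_params that)+
  moreover have "tens_der (rmul br (vsmult c y) z) F = vsmult c (tens_der (rmul br y z) F)"
    "tens_der (rmul br z (vsmult c y)) F = vsmult c (tens_der (rmul br z y) F)"
    if "y \<in> fsp B" "z \<in> fsp B" for y z c
    by (simp_all only: tens_der_vsmult_op[symmetric])
       (rule tens_der_cong[OF _ F], simp add: rmul_linear_params that)+
  ultimately show "bilinear_on U U (\<lambda>A A'. tens_der (rmul br (\<lambda>c. A (Some c)) (\<lambda>c. A' (Some c))) F)"
    by (simp add: bilinear_on_def linear_on_def lpart_vadd lpart_vsmult fsp_lpart)
qed (simp add: tens_bracket_delta lpart_delta)

lemma tens_bracket_delta_delta: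
  assumes "p1 \<in> U" "p2 \<in> U" "q1 \<in> U" "q2 \<in> U"
  shows "tens_bracket br (delta (p1, p2)) (delta (q1, q2)) =
    vadd (tens (rmul br (snd (ubasis q1)) (snd (ubasis q2)) (delta p1)) (delta p2))
      (tens (delta p1) (rmul br (snd (ubasis q1)) (snd (ubasis q2)) (delta p2)))"
proof -
  have "tens_bracket br (delta (p1, p2)) (delta (q1, q2)) =
      tens_der (rmul br (snd (ubasis q1)) (snd (ubasis q2))) (tens (delta p1) (delta p2))"
    by (simp add: tens_bracket_delta tens_delta)
  also have "\<dots> = vadd (tens (rmul br (snd (ubasis q1)) (snd (ubasis q2)) (delta p1)) (delta p2))
      (tens (delta p1) (rmul br (snd (ubasis q1)) (snd (ubasis q2)) (delta p2)))"
    by (rule tens_der_tens[OF linear_on_rmul]) (simp_all add: assms fsp_snd_ubasis fsp_delta)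
  finally show ?thesis .
qed

lemma tens_bracket_tens_bracket_delta:
  assumes F: "F \<in> fsp (U \<times> U)" and q: "q1 \<in> U" "q2 \<in> U" and r: "r1 \<in> U" "r2 \<in> U"
  shows "tens_bracket br F (tens_bracket br (delta (q1, q2)) (delta (r1, r2))) =
    vadd (tens_der (rmul br (br (snd (ubasis q1)) (snd (ubasis r1)) (snd (ubasis r2))) (snd (ubasis q2))) F)
      (tens_der (rmul br (snd (ubasis q1)) (br (snd (ubasis q2)) (snd (ubasis r1)) (snd (ubasis r2)))) F)"
proof -
  let ?r = "rmul br (snd (ubasis r1)) (snd (ubasis r2))"
  have r_fsp: "?r (delta q1) \<in> fsp U" "?r (delta q2) \<in> fsp U"
    using q r by (simp_all add: rmul_fsp fsp_delta fsp_snd_ubasis)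
  then have "tens_bracket br F (tens_bracket br (delta (q1, q2)) (delta (r1, r2))) =
      vadd (tens_bracket br F (tens (?r (delta q1)) (delta q2)))
        (tens_bracket br F (tens (delta q1) (?r (delta q2))))"
    using q r by (simp add: tens_bracket_delta_delta linear_onD[OF linear_on_tens_bracket_right[of "U \<times> U"]]
        fsp_tens fsp_delta)
  also have "\<dots> = vadd (tens_der (rmul br (br (snd (ubasis q1)) (snd (ubasis r1)) (snd (ubasis r2)))
        (snd (ubasis q2))) F)
      (tens_der (rmul br (snd (ubasis q1)) (br (snd (ubasis q2)) (snd (ubasis r1)) (snd (ubasis r2)))) F)"
    using q r_fsp by (simp add: tens_bracket_tens[OF F] fsp_delta lpart_delta)
  finally show ?thesis .
qed

lemma tens_bracket_leibniz:
  assumes F: "F \<in> fsp (U \<times> U)" and G: "G \<in> fsp (U \<times> U)" and H: "H \<in> fsp (U \<times> U)"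
  shows "tens_bracket br (tens_bracket br F G) H =
    vadd (tens_bracket br (tens_bracket br F H) G) (tens_bracket br F (tens_bracket br G H))"
proof (rule bilinear_on_eq_on_basis[OF _ _ _ G H])
  note lin_right = linear_on_tens_bracket_right[of "U \<times> U" br]
    and lin_left = linear_on_tens_bracket_left
    and closed = tens_bracket_fsp
  show "bilinear_on (U \<times> U) (U \<times> U) (\<lambda>G H. tens_bracket br (tens_bracket br F G) H)"
    unfolding bilinear_on_def
    by (auto intro: linear_on_comp[OF lin_right closed[OF F] lin_left] lin_right)
  show "bilinear_on (U \<times> U) (U \<times> U)
      (\<lambda>G H. vadd (tens_bracket br (tens_bracket br F H) G) (tens_bracket br F (tens_bracket br G H)))"
    unfolding bilinear_on_def
    by (auto intro!: linear_on_vadd lin_right linear_on_comp[OF lin_left closed lin_right]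
        linear_on_comp[OF lin_right closed[OF F] lin_left] linear_on_comp[OF lin_right closed lin_right])
  fix q r assume "q \<in> U \<times> U" "r \<in> U \<times> U"
  then obtain q1 q2 r1 r2 where qr: "q = (q1, q2)" "r = (r1, r2)" "q1 \<in> U" "q2 \<in> U" "r1 \<in> U" "r2 \<in> U"
    by auto
  let ?y = "\<lambda>p. snd (ubasis p) :: 'b \<Rightarrow> 'k"
  have y: "?y q1 \<in> fsp B" "?y q2 \<in> fsp B" "?y r1 \<in> fsp B" "?y r2 \<in> fsp B"
    using qr by (simp_all add: fsp_snd_ubasis)
  have "tens_bracket br (tens_bracket br F (delta q)) (delta r) =
      tens_der (rmul br (?y r1) (?y r2)) (tens_der (rmul br (?y q1) (?y q2)) F)"
    by (simp add: qr tens_bracket_delta)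
  also have "\<dots> = vadd (tens_der (rmul br (?y q1) (?y q2)) (tens_der (rmul br (?y r1) (?y r2)) F))
      (vadd (tens_der (rmul br (br (?y q1) (?y r1) (?y r2)) (?y q2)) F)
        (tens_der (rmul br (?y q1) (br (?y q2) (?y r1) (?y r2))) F))"
    by (rule tens_der_rmul_commutator[OF F y])
  also have "\<dots> = vadd (tens_bracket br (tens_bracket br F (delta r)) (delta q))
        (tens_bracket br F (tens_bracket br (delta q) (delta r)))"
    unfolding qr(1,2) tens_bracket_tens_bracket_delta[OF F qr(3-6)] by (simp add: tens_bracket_delta)
  finally show "tens_bracket br (tens_bracket br F (delta q)) (delta r) = \<dots>" .
qed

lemma tens_bracket_unit_right: "F \<in> fsp (U \<times> U) \<Longrightarrow> tens_bracket br F unit_tens = (\<lambda>_. 0)"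
  unfolding unit_tens_def
  by (simp add: tens_bracket_delta tens_der_cong[of U _ "\<lambda>_ _. 0"] rmul_zero_left)

lemma tens_bracket_unit_left: "G \<in> fsp (U \<times> U) \<Longrightarrow> tens_bracket br unit_tens G = (\<lambda>_. 0)"
proof (rule linear_on_eq_on_basis[OF linear_on_tens_bracket_right])
  show "linear_on (U \<times> U) (\<lambda>_. \<lambda>_. 0 :: 'k)"
    by (simp add: linear_on_def vadd_def vsmult_def)
  fix q assume "q \<in> U \<times> U"
  then obtain p1 p2 where "q = (p1, p2)" "p1 \<in> U" "p2 \<in> U"
    by auto
  then show "tens_bracket br unit_tens (delta q) = (\<lambda>_. 0)"
    by (simp add: unit_tens_def tens_bracket_delta_delta ubar_idx_def rmul_delta_None fsp_snd_ubasis)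
qed

lemma Rmap_tens:
  assumes "a \<in> fsp (U \<times> U)" "b \<in> fsp (U \<times> U)"
  shows "Rmap br (tens a b) = vadd (tens b a) (tens unit_tens (tens_bracket br a b))"
proof (rule linear_on_tens_eq[OF linear_on_Rmap _ _ assms])
  show "bilinear_on (U \<times> U) (U \<times> U) (\<lambda>a b. vadd (tens b a) (tens unit_tens (tens_bracket br a b)))"
    using bilinear_on_tens_bracket unfolding bilinear_on_def linear_on_def
    by (simp add: tens_vadd_left tens_vadd_right tens_vsmult_left tens_vsmult_right)
       (simp add: vadd_def vsmult_def fun_eq_iff algebra_simps)
  fix x y assume "x \<in> U \<times> U" "y \<in> U \<times> U"
  then obtain x1 x2 y1 y2 where xy: "x = (x1, x2)" "y = (y1, y2)" "x1 \<in> U" "x2 \<in> U" "y1 \<in> U" "y2 \<in> U"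
    by auto
  have "ucoord (0, br (snd (ubasis p)) (snd (ubasis y1)) (snd (ubasis y2))) =
      rmul br (snd (ubasis y1)) (snd (ubasis y2)) (delta p)" for p
    by (simp add: rmul_def lpart_delta)
  then show "Rmap br (delta (x, y)) = vadd (tens (delta y) (delta x)) (tens unit_tens (tens_bracket br (delta x) (delta y)))"
    using xy
    by (simp add: Rmap_def Rpure_def tens4_def ucoord_ubasis ucoord_one tens_delta unit_tens_def
        tens_bracket_delta_delta tens_vadd_right)
qed

lemma leibniz_braiding: "leibniz_braiding (U \<times> U) (tens_bracket br) unit_tens (Rmap br)"
proof
  show "unit_tens \<in> fsp (U \<times> U)"
    by (simp add: unit_tens_def ubar_idx_def fsp_delta)
qed (fact tens_bracket_fsp bilinear_on_tens_bracket tens_bracket_leibniz tens_bracket_unit_left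
    tens_bracket_unit_right linear_on_Rmap Rmap_tens)+

end

theorem corollary5p6:
  fixes B :: "'b set"
    and br :: "('b \<Rightarrow> 'k::field) \<Rightarrow> ('b \<Rightarrow> 'k) \<Rightarrow> ('b \<Rightarrow> 'k) \<Rightarrow> ('b \<Rightarrow> 'k)"
  assumes "leibniz3 B br"
  shows "YBE_solution (ubar_idx B \<times> ubar_idx B) (Rmap br)"
proof -
  interpret leibniz3_algebra B br
    by (rule leibniz3_algebra.intro) fact
  show ?thesis
    by (rule leibniz_braiding.YBE_solution[OF leibniz_braiding])
qed

end
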